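(* Let $A \in \mathbb{C}^{n \times n}$, and fix $A^-\in A\{1\}$ and $A^{GD}\in A\{GD\}$. For $X\in\mathbb{C}^{n\times n}$ the following are equivalent: (i) $X = A^{GD}AA^{-}$; (ii) $XAX=X$, $R(X)=R(A^{GD}A)$, and $N(X)=N(AA^{-})$; (iii) $XAX=X$, $XA=A^{GD}A$, and $AX=AA^{-}$.
   Context: For $A\in\mathbb{C}^{n\times n}$, $ind(A)$ is the smallest nonnegative integer $k$ with $\mathrm{rank}(A^k)=\mathrm{rank}(A^{k+1})$. $A\{1\}$ is the set of matrices $X$ with $AXA=A$. With $k=ind(A)$, $A\{GD\}$ is the set of G-Drazin inverses of $A$: matrices $X$ with $AXA=A$, $XA^{k+1}=A^k$, $A^{k+1}X=A^k$. $R(\cdot)$, $N(\cdot)$ denote range and null space. *)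

theory Defs
  imports "HOL-Analysis.Analysis"
begin

primrec matpow :: "'a::semiring_1^'n^'n \<Rightarrow> nat \<Rightarrow> 'a^'n^'n" where
  "matpow A 0 = mat 1"
| "matpow A (Suc k) = A ** matpow A k"

definition ind :: "'a::field^'n^'n \<Rightarrow> nat" where
  "ind A = (LEAST k. rank (matpow A k) = rank (matpow A (Suc k)))"

definition inner_inverses :: "'a::field^'n^'n \<Rightarrow> ('a^'n^'n) set" where
  "inner_inverses A = {X. A ** X ** A = A}"

definition gd_inverses :: "'a::field^'n^'n \<Rightarrow> ('a^'n^'n) set" where
  "gd_inverses A = {X. A ** X ** A = A
      \<and> X ** matpow A (Suc (ind A)) = matpow A (ind A)
      \<and> matpow A (Suc (ind A)) ** X = matpow A (ind A)}"

definition mat_range :: "'a::field^'n^'m \<Rightarrow> ('a^'m) set" where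
  "mat_range X = range (\<lambda>x. X *v x)"

definition mat_null :: "'a::field^'n^'m \<Rightarrow> ('a^'n) set" where
  "mat_null X = {x. X *v x = 0}"

end

theory Submission
  imports Defs
begin

(* Then X A = G A and A X = A M follow from
   A M A = A = A G A, and X A X = X with them. Conversely, X A X = X makes X A an idempotent
   fixing R(X) = R(G A), so X A = (X A)(G A) = G A; dually A X = A M via N(X) = N(A M).
   Finally X = (X A) X = G (A X) = G A M. *)

lemma mat_range_mult_subset:
  fixes P :: "'a::field^'k^'m" and Q :: "'a^'n^'k"
  shows "mat_range (P ** Q) \<subseteq> mat_range P"
  unfolding mat_range_def by (auto simp: matrix_vector_mul_assoc[symmetric])

lemma mat_null_mult_subset:
  fixes P :: "'a::field^'k^'m" and Q :: "'a^'n^'k"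
  shows "mat_null Q \<subseteq> mat_null (P ** Q)"
  unfolding mat_null_def by (auto simp: matrix_vector_mul_assoc[symmetric])

lemma mat_range_subset_left_fixed:
  fixes B :: "'a::field^'m^'m" and Y :: "'a^'k^'m" and Z :: "'a^'n^'m"
  assumes range: "mat_range Z \<subseteq> mat_range Y" and fixed: "B ** Y = Y"
  shows "B ** Z = Z"
proof -
  have "(B ** Z) *v v = Z *v v" for v
  proof -
    obtain w where w: "Z *v v = Y *v w"
      using range unfolding mat_range_def by auto
    have "(B ** Z) *v v = (B ** Y) *v w"
      by (simp add: matrix_vector_mul_assoc[symmetric] w)
    then show ?thesis
      by (simp add: fixed w)
  qed
  then show ?thesis
    by (simp add: matrix_eq)
qed

lemma mat_null_subset_right_fixed:
  fixes B :: "'a::field^'n^'n" and Y :: "'a^'n^'k" and Z :: "'a^'n^'m"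
  assumes null: "mat_null Y \<subseteq> mat_null Z" and fixed: "Y ** B = Y"
  shows "Z ** B = Z"
proof -
  have "(Z ** B) *v v = Z *v v" for v
  proof -
    have "Y *v (v - B *v v) = 0"
      by (simp add: matrix_vector_mult_diff_distrib matrix_vector_mul_assoc fixed)
    then have "Z *v (v - B *v v) = 0"
      using null unfolding mat_null_def by auto
    then show ?thesis
      by (simp add: matrix_vector_mult_diff_distrib matrix_vector_mul_assoc)
  qed
  then show ?thesis
    by (simp add: matrix_eq)
qed

lemma gd_inverse_imp_inner_inverse:
  "X \<in> gd_inverses A \<Longrightarrow> X \<in> inner_inverses A"
  unfolding gd_inverses_def inner_inverses_def by simp

lemma eq_inner_inverse_sandwich_iff_products:
  fixes A G M X :: "'a::field^'n^'n"
  assumes "G \<in> inner_inverses A" and "M \<in> inner_inverses A"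
  shows "X = G ** A ** M \<longleftrightarrow> X ** A ** X = X \<and> X ** A = G ** A \<and> A ** X = A ** M"
proof -
  have AGA: "A ** G ** A = A" and AMA: "A ** M ** A = A"
    using assms unfolding inner_inverses_def by simp_all
  have "X ** A = G ** A" "A ** X = A ** M" if "X = G ** A ** M"
    using that AGA AMA by (metis matrix_mul_assoc)+
  moreover have "X ** A ** X = G ** A ** M" if "X ** A = G ** A" "A ** X = A ** M"
    using that by (metis matrix_mul_assoc)
  ultimately show ?thesis
    by metis
qed

lemma eq_inner_inverse_sandwich_iff_range_null:
  fixes A G M X :: "'a::field^'n^'n"
  assumes G: "G \<in> inner_inverses A" and M: "M \<in> inner_inverses A"
  shows "X = G ** A ** M \<longleftrightarrow>
    X ** A ** X = X \<and> mat_range X = mat_range (G ** A) \<and> mat_null X = mat_null (A ** M)"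
proof -
  have AGA: "A ** G ** A = A" and AMA: "A ** M ** A = A"
    using assms unfolding inner_inverses_def by simp_all
  note products = eq_inner_inverse_sandwich_iff_products[OF G M, of X]
  show ?thesis
  proof
    assume X: "X = G ** A ** M"
    then have XAX: "X ** A ** X = X" and XA: "X ** A = G ** A" and AX: "A ** X = A ** M"
      using products by blast+
    have "mat_range (G ** A) = mat_range (X ** A)"
      by (simp add: XA)
    then have "mat_range X = mat_range (G ** A)"
      using mat_range_mult_subset[of "G ** A" M] mat_range_mult_subset[of X A]
      by (simp add: X)
    moreover have "mat_null (A ** M) = mat_null (A ** X)"
      by (simp add: AX)
    then have "mat_null X = mat_null (A ** M)"
      using mat_null_mult_subset[of "A ** M" G] mat_null_mult_subset[of X A]
      by (simp add: X matrix_mul_assoc)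
    ultimately show "X ** A ** X = X \<and> mat_range X = mat_range (G ** A)
        \<and> mat_null X = mat_null (A ** M)"
      using XAX by blast
  next
    assume "X ** A ** X = X \<and> mat_range X = mat_range (G ** A) \<and> mat_null X = mat_null (A ** M)"
    then have XAX: "X ** A ** X = X" and range: "mat_range X = mat_range (G ** A)"
      and null: "mat_null X = mat_null (A ** M)"
      by simp_all
    have "(X ** A) ** (G ** A) = G ** A"
      using mat_range_subset_left_fixed[of "G ** A" X "X ** A"] range XAX by simp
    then have "X ** A = G ** A"
      by (metis AGA matrix_mul_assoc)
    moreover have "(A ** M) ** (A ** X) = A ** M"
      using mat_null_subset_right_fixed[of X "A ** M" "A ** X"] null XAX
      by (simp add: matrix_mul_assoc)
    then have "A ** X = A ** M"
      by (metis AMA matrix_mul_assoc)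
    ultimately show "X = G ** A ** M"
      using XAX products by simp
  qed
qed

theorem theorem2p7:
  fixes A Am Agd X :: "complex^'n^'n"
  assumes "Am \<in> inner_inverses A"
    and "Agd \<in> gd_inverses A"
  shows "(X = Agd ** A ** Am
          \<longleftrightarrow> (X ** A ** X = X \<and> mat_range X = mat_range (Agd ** A)
               \<and> mat_null X = mat_null (A ** Am)))
       \<and> (X = Agd ** A ** Am
          \<longleftrightarrow> (X ** A ** X = X \<and> X ** A = Agd ** A \<and> A ** X = A ** Am))"
proof -
  have "Agd \<in> inner_inverses A"
    using assms(2) by (rule gd_inverse_imp_inner_inverse)
  with assms(1) show ?thesis
    using eq_inner_inverse_sandwich_iff_range_null eq_inner_inverse_sandwich_iff_products
    by blast
qed

end
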